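(* Let $v\in\{\mathrm{RR},\mathrm{VV},\mathrm{VN},\mathrm{AZ}\}$ and let $\mathbf X_1=(X_{11},\ldots,X_{1d})^\top$ be a $d$-dimensional random vector with mean $\boldsymbol\mu$ and covariance $\boldsymbol\Sigma$ satisfying Assumption 1 for the variant $v$ and Assumption 2. Then $\sigma^2_{C^v}>0$ and hence $\sigma^2_{B^v}>0$.
   Context: MCVs: $C^{\mathrm{RR}}=\sqrt{(\det\boldsymbol\Sigma)^{1/d}/(\boldsymbol\mu^\top\boldsymbol\mu)}$, $C^{\mathrm{VV}}=\sqrt{\mathrm{tr}\boldsymbol\Sigma/(\boldsymbol\mu^\top\boldsymbol\mu)}$, $C^{\mathrm{VN}}=\sqrt{1/(\boldsymbol\mu^\top\boldsymbol\Sigma^{-1}\boldsymbol\mu)}$, $C^{\mathrm{AZ}}=\sqrt{\boldsymbol\mu^\top\boldsymbol\Sigma\boldsymbol\mu/(\boldsymbol\mu^\top\boldsymbol\mu)^2}$. Assumption 1 (for variant $v$): $\boldsymbol\mu\neq\mathbf 0$ and all coordinates have finite fourth moments; moreover for $v\in\{\mathrm{RR},\mathrm{VN}\}$, $\boldsymbol\Sigma$ is regular; for $v=\mathrm{VV}$, $\boldsymbol\Sigma\neq\mathbf 0_{d\times d}$; for $v=\mathrm{AZ}$, $\boldsymbol\mu^\top\boldsymbol\Sigma\boldsymbol\mu>0$. Assumption 2: no coordinate of $\mathbf X_1$ is conditionally two-point distributed, where the $r$-th coordinate $Y_r$ of a random vector $\mathbf Y\in\mathbb R^d$ is called conditionally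 two-point distributed if, given the remaining components $(Y_s)_{s\neq r}$, it is (conditionally) degenerate or takes (conditionally) only two different values with positive probability. $\boldsymbol\Psi_3,\boldsymbol\Psi_4$: $[\boldsymbol\Psi_3]_{(a-1)d+r,s}=E(X_{1a}X_{1r}X_{1s})-E(X_{1a}X_{1r})E(X_{1s})$, $[\boldsymbol\Psi_4]_{(a-1)d+r,(b-1)d+s}=E(X_{1a}X_{1r}X_{1b}X_{1s})-E(X_{1a}X_{1r})E(X_{1b}X_{1s})$. For $\mathbf x\in\mathbb R^d$, $[\widetilde{\mathbf D}(\mathbf x)]_{(a-1)d+r,s}=-x_r\mathbf 1\{s=a\neq r\}-2x_s\mathbf 1\{s=r=a\}-x_a\mathbf 1\{r=s\neq a\}$. $\mathrm{vec}$ stacks columns, $\otimes$ is the Kronecker product. Row vectors: $\mathbf A_{\mathrm{RR}}=\Big(-2d\det(\boldsymbol\Sigma)\frac{\boldsymbol\mu^\top}{(\boldsymbol\mu^\top\boldsymbol\mu)^{d+1}}+\frac{\det(\boldsymbol\Sigma)(\mathrm{vec}(\boldsymbol\Sigma^{-1}))^\top}{(\boldsymbol\mu^\top\boldsymbol\mu)^d}\widetilde{\mathbf D}(\boldsymbol\mu),\ \frac{\det(\boldsymbol\Sigma)(\mathrm{vec}(\boldsymbol\Sigma^{-1}))^\top}{(\boldsymbol\mu^\top\boldsymbol\mu)^d}\Big)$, $\mathbf A_{\mathrm{VV}}=\Big(-2\,\mathrm{tr}(\boldsymbol\Sigma)\frac{\boldsymbol\mu^\top}{(\boldsymbol\mu^\top\boldsymbol\mu)^2}+\frac{(\mathrm{vec}(\mathbf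 I_d))^\top\widetilde{\mathbf D}(\boldsymbol\mu)}{\boldsymbol\mu^\top\boldsymbol\mu},\ \frac{(\mathrm{vec}(\mathbf I_d))^\top}{\boldsymbol\mu^\top\boldsymbol\mu}\Big)$, $\mathbf A_{\mathrm{VN}}=\Big(2\boldsymbol\mu^\top\boldsymbol\Sigma^{-1}-[(\boldsymbol\mu^\top\boldsymbol\Sigma^{-1})\otimes(\boldsymbol\mu^\top\boldsymbol\Sigma^{-1})]\widetilde{\mathbf D}(\boldsymbol\mu),\ -(\boldsymbol\mu^\top\boldsymbol\Sigma^{-1})\otimes(\boldsymbol\mu^\top\boldsymbol\Sigma^{-1})\Big)$, $\mathbf A_{\mathrm{AZ}}=\Big(-4\boldsymbol\mu^\top\boldsymbol\Sigma\boldsymbol\mu\frac{\boldsymbol\mu^\top}{(\boldsymbol\mu^\top\boldsymbol\mu)^3}+2\frac{\boldsymbol\mu^\top\boldsymbol\Sigma}{(\boldsymbol\mu^\top\boldsymbol\mu)^2}+\frac{(\boldsymbol\mu^\top\otimes\boldsymbol\mu^\top)\widetilde{\mathbf D}(\boldsymbol\mu)}{(\boldsymbol\mu^\top\boldsymbol\mu)^2},\ \frac{\boldsymbol\mu^\top\otimes\boldsymbol\mu^\top}{(\boldsymbol\mu^\top\boldsymbol\mu)^2}\Big)$. $S_{\mathrm{RR}}=d^{-2}(C^{\mathrm{RR}})^{2-4d}$, $S_{\mathrm{VV}}=(C^{\mathrm{VV}})^{-2}$, $S_{\mathrm{VN}}=(C^{\mathrm{VN}})^{6}$, $S_{\mathrm{AZ}}=(C^{\mathrm{AZ}})^{-2}$;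 $\sigma^2_{C^v}=\frac{S_v}{4}\mathbf A_v(\boldsymbol\mu,\boldsymbol\Sigma)\begin{pmatrix}\boldsymbol\Sigma&\boldsymbol\Psi_3^\top\\\boldsymbol\Psi_3&\boldsymbol\Psi_4\end{pmatrix}\mathbf A_v(\boldsymbol\mu,\boldsymbol\Sigma)^\top$ and $\sigma^2_{B^v}=(C^v)^{-4}\sigma^2_{C^v}$. *)

theory Defs
  imports "HOL-Probability.Probability"
begin

text \<open>A random vector X :: 'a => real^'d on a probability space M. The dimension is d = CARD('d).
  Indices (a-1)d+r of vectors of length d^2 are represented by pairs (a,r) :: 'd * 'd.\<close>

datatype mcv_variant = RR | VV | VN | AZ

definition E :: "'a measure \<Rightarrow> ('a \<Rightarrow> real) \<Rightarrow> real" where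
  "E M f = integral\<^sup>L M f"

definition mu :: "'a measure \<Rightarrow> ('a \<Rightarrow> real^'d) \<Rightarrow> real^'d" where
  "mu M X = (\<chi> i. E M (\<lambda>w. X w $ i))"

definition Sig :: "'a measure \<Rightarrow> ('a \<Rightarrow> real^'d) \<Rightarrow> real^'d^'d" where
  "Sig M X = (\<chi> r s. E M (\<lambda>w. X w $ r * X w $ s) - mu M X $ r * mu M X $ s)"

definition Psi3 :: "'a measure \<Rightarrow> ('a \<Rightarrow> real^'d) \<Rightarrow> 'd \<times> 'd \<Rightarrow> 'd \<Rightarrow> real" where
  "Psi3 M X p s = (case p of (a, r) \<Rightarrow>
     E M (\<lambda>w. X w $ a * X w $ r * X w $ s) - E M (\<lambda>w. X w $ a * X w $ r) * E M (\<lambda>w. X w $ s))"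

definition Psi4 :: "'a measure \<Rightarrow> ('a \<Rightarrow> real^'d) \<Rightarrow> 'd \<times> 'd \<Rightarrow> 'd \<times> 'd \<Rightarrow> real" where
  "Psi4 M X p q = (case p of (a, r) \<Rightarrow> case q of (b, s) \<Rightarrow>
     E M (\<lambda>w. X w $ a * X w $ r * X w $ b * X w $ s)
     - E M (\<lambda>w. X w $ a * X w $ r) * E M (\<lambda>w. X w $ b * X w $ s))"

definition Dt :: "real^'d \<Rightarrow> 'd \<times> 'd \<Rightarrow> 'd \<Rightarrow> real" where
  "Dt x p s = (case p of (a, r) \<Rightarrow>
     - x $ r * (if s = a \<and> a \<noteq> r then 1 else 0)
     - 2 * x $ s * (if s = r \<and> r = a then 1 else 0)
     - x $ a * (if r = s \<and> s \<noteq> a then 1 else 0))"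

definition rowD :: "('d \<times> 'd \<Rightarrow> real) \<Rightarrow> real^'d \<Rightarrow> 'd \<Rightarrow> real" where
  "rowD u x s = (\<Sum>p\<in>UNIV. u p * Dt x p s)"

definition trace_m :: "real^'d^'d \<Rightarrow> real" where
  "trace_m S = (\<Sum>i\<in>UNIV. S $ i $ i)"

text \<open>First block (length d) and second block (length d^2, index (a-1)d+r ~ (a,r)) of A_v(mu,Sigma).
  vec stacks columns: vec(B) at index (a-1)d+r is B_{r,a}; (u^T (x) w^T) at (a-1)d+r is u_a w_r.\<close>
definition A2 :: "mcv_variant \<Rightarrow> real^'d \<Rightarrow> real^'d^'d \<Rightarrow> 'd \<times> 'd \<Rightarrow> real" where
  "A2 v m S p = (case p of (a, r) \<Rightarrow> (case v of
     RR \<Rightarrow> det S * matrix_inv S $ r $ a / (m \<bullet> m) ^ CARD('d)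
   | VV \<Rightarrow> (if r = a then 1 else 0) / (m \<bullet> m)
   | VN \<Rightarrow> - ((m v* matrix_inv S) $ a * (m v* matrix_inv S) $ r)
   | AZ \<Rightarrow> m $ a * m $ r / (m \<bullet> m) ^ 2))"

definition A1 :: "mcv_variant \<Rightarrow> real^'d \<Rightarrow> real^'d^'d \<Rightarrow> 'd \<Rightarrow> real" where
  "A1 v m S s = (case v of
     RR \<Rightarrow> - 2 * real CARD('d) * det S * m $ s / (m \<bullet> m) ^ (CARD('d) + 1)
           + rowD (A2 RR m S) m s
   | VV \<Rightarrow> - 2 * trace_m S * m $ s / (m \<bullet> m) ^ 2
           + rowD (\<lambda>(a, r). if r = a then 1 else 0) m s / (m \<bullet> m)
   | VN \<Rightarrow> 2 * (m v* matrix_inv S) $ s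
           - rowD (\<lambda>(a, r). (m v* matrix_inv S) $ a * (m v* matrix_inv S) $ r) m s
   | AZ \<Rightarrow> - 4 * (m \<bullet> (S *v m)) * m $ s / (m \<bullet> m) ^ 3
           + 2 * (m v* S) $ s / (m \<bullet> m) ^ 2
           + rowD (\<lambda>(a, r). m $ a * m $ r) m s / (m \<bullet> m) ^ 2)"

definition MCV :: "mcv_variant \<Rightarrow> real^'d \<Rightarrow> real^'d^'d \<Rightarrow> real" where
  "MCV v m S = (case v of
     RR \<Rightarrow> sqrt (det S powr (1 / real CARD('d)) / (m \<bullet> m))
   | VV \<Rightarrow> sqrt (trace_m S / (m \<bullet> m))
   | VN \<Rightarrow> sqrt (1 / (m \<bullet> (matrix_inv S *v m)))
   | AZ \<Rightarrow> sqrt ((m \<bullet> (S *v m)) / (m \<bullet> m) ^ 2))"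

definition Sfac :: "mcv_variant \<Rightarrow> real^'d \<Rightarrow> real^'d^'d \<Rightarrow> real" where
  "Sfac v m S = (case v of
     RR \<Rightarrow> (1 / real CARD('d) ^ 2) * MCV RR m S powr (2 - 4 * real CARD('d))
   | VV \<Rightarrow> MCV VV m S powr (-2)
   | VN \<Rightarrow> MCV VN m S ^ 6
   | AZ \<Rightarrow> MCV AZ m S powr (-2))"

text \<open>A_v Gamma A_v^T with Gamma = [[Sigma, Psi3^T],[Psi3, Psi4]].\<close>
definition sigma2_C :: "mcv_variant \<Rightarrow> 'a measure \<Rightarrow> ('a \<Rightarrow> real^'d) \<Rightarrow> real" where
  "sigma2_C v M X = (let m = mu M X; S = Sig M X; a1 = A1 v m S; a2 = A2 v m S in
     Sfac v m S / 4 *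
      ((\<Sum>r\<in>UNIV. \<Sum>s\<in>UNIV. a1 r * S $ r $ s * a1 s)
     + (\<Sum>r\<in>UNIV. \<Sum>p\<in>UNIV. a1 r * Psi3 M X p r * a2 p)
     + (\<Sum>p\<in>UNIV. \<Sum>s\<in>UNIV. a2 p * Psi3 M X p s * a1 s)
     + (\<Sum>p\<in>UNIV. \<Sum>q\<in>UNIV. a2 p * Psi4 M X p q * a2 q)))"

definition sigma2_B :: "mcv_variant \<Rightarrow> 'a measure \<Rightarrow> ('a \<Rightarrow> real^'d) \<Rightarrow> real" where
  "sigma2_B v M X = MCV v (mu M X) (Sig M X) powr (-4) * sigma2_C v M X"

definition assumption1 :: "mcv_variant \<Rightarrow> 'a measure \<Rightarrow> ('a \<Rightarrow> real^'d) \<Rightarrow> bool" where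
  "assumption1 v M X \<longleftrightarrow>
     mu M X \<noteq> 0 \<and> (\<forall>i. integrable M (\<lambda>w. (X w $ i) ^ 4)) \<and>
     (case v of
        RR \<Rightarrow> invertible (Sig M X)
      | VN \<Rightarrow> invertible (Sig M X)
      | VV \<Rightarrow> Sig M X \<noteq> 0
      | AZ \<Rightarrow> mu M X \<bullet> (Sig M X *v mu M X) > 0)"

text \<open>The remaining components (Y_s)_{s~=r}, encoded as Y with the r-th coordinate set to 0.\<close>
definition others :: "'d \<Rightarrow> real^'d \<Rightarrow> real^'d" where
  "others r y = (\<chi> s. if s = r then 0 else y $ s)"

definition cond_two_point :: "'a measure \<Rightarrow> ('a \<Rightarrow> real^'d) \<Rightarrow> 'd \<Rightarrow> bool" where
  "cond_two_point M Y r \<longleftrightarrow>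
     (\<exists>g h :: real^'d \<Rightarrow> real. g \<in> borel_measurable borel \<and> h \<in> borel_measurable borel \<and>
        (AE w in M. Y w $ r = g (others r (Y w)) \<or> Y w $ r = h (others r (Y w))))"

definition assumption2 :: "'a measure \<Rightarrow> ('a \<Rightarrow> real^'d) \<Rightarrow> bool" where
  "assumption2 M X \<longleftrightarrow> (\<forall>r. \<not> cond_two_point M X r)"

end

theory Submission
  imports Defs "HOL-Library.Quadratic_Discriminant"
begin

text \<open>With \<open>(a\<^sub>1, a\<^sub>2) = A\<^sub>v(\<mu>, \<Sigma>)\<close>, the form \<open>A\<^sub>v \<Gamma> A\<^sub>v\<^sup>T\<close> is the variance of the quadratic
  polynomial \<open>q(X\<^sub>1) = a\<^sub>1\<^sup>T X\<^sub>1 + a\<^sub>2\<^sup>T vec(X\<^sub>1 X\<^sub>1\<^sup>T)\<close>, since \<open>\<Gamma>\<close> is the covariance matrix of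
  \<open>(X\<^sub>1, vec(X\<^sub>1 X\<^sub>1\<^sup>T))\<close>. If it vanished, \<open>q(X\<^sub>1)\<close> would be almost surely constant, and
  solving this quadratic equation for \<open>X\<^sub>1\<^sub>r\<close> would make \<open>X\<^sub>1\<^sub>r\<close> conditionally two-point
  distributed given the other coordinates, as soon as its leading coefficient \<open>a\<^sub>2(r,r)\<close>
  is nonzero. For each variant some diagonal entry of \<open>a\<^sub>2\<close> is indeed nonzero, and
  \<open>C\<^sup>v\<close> and \<open>S\<^sub>v\<close> do not vanish; both facts only use that \<open>\<Sigma>\<close> is positive semidefinite.\<close>

lemma invertible_matrix_inv:
  assumes "invertible (A :: real^'n^'n)"
  shows "A ** matrix_inv A = mat 1" "matrix_inv A ** A = mat 1"
proof -
  have "A ** matrix_inv A = mat 1 \<and> matrix_inv A ** A = mat 1"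
    unfolding matrix_inv_def using assms unfolding invertible_def by (rule someI_ex)
  then show "A ** matrix_inv A = mat 1" "matrix_inv A ** A = mat 1" by auto
qed

definition pos_semidef :: "real^'n^'n \<Rightarrow> bool" where
  "pos_semidef S \<longleftrightarrow> transpose S = S \<and> (\<forall>x. 0 \<le> x \<bullet> (S *v x))"

lemma linear_coeff_eq_0_if_nonneg:
  fixes b c :: real
  assumes "\<And>t. 0 \<le> 2 * t * b + t\<^sup>2 * c"
  shows "b = 0"
proof (cases "c \<le> 0")
  case True
  have "0 \<le> 2 * (-b) * b + (-b)\<^sup>2 * c" by (rule assms)
  moreover have "b\<^sup>2 * c \<le> 0" using True by (simp add: mult_nonneg_nonpos)
  ultimately have "b\<^sup>2 \<le> 0" by (simp add: power2_eq_square algebra_simps)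
  then show ?thesis by simp
next
  case False
  have "0 \<le> 2 * (-b/c) * b + (-b/c)\<^sup>2 * c" by (rule assms)
  also have "\<dots> = - (b\<^sup>2 / c)" using False by (simp add: power2_eq_square field_simps)
  finally have "b\<^sup>2 \<le> 0" using False by (simp add: divide_le_0_iff)
  then show ?thesis by simp
qed

lemma pos_semidef_mult_eq_0_if_form_eq_0:
  fixes S :: "real^'n^'n"
  assumes psd: "pos_semidef S" and y: "y \<bullet> (S *v y) = 0"
  shows "S *v y = 0"
proof -
  have "(S *v y) $ r = 0" for r
  proof (rule linear_coeff_eq_0_if_nonneg)
    fix t :: real
    define e :: "real^'n" where "e = axis r 1"
    have Se: "S *v (t *\<^sub>R e) = t *\<^sub>R (S *v e)"
      by (simp add: vec_eq_iff matrix_vector_mult_def sum_distrib_left mult_ac)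
    have "y \<bullet> (S *v e) = (y v* S) \<bullet> e" by (simp add: dot_lmul_matrix)
    also have "y v* S = S *v y"
      using psd vector_transpose_matrix[of y S] unfolding pos_semidef_def by simp
    finally have sym: "y \<bullet> (S *v e) = (S *v y) $ r"
      unfolding e_def by (simp add: inner_axis)
    have "0 \<le> (y + t *\<^sub>R e) \<bullet> (S *v (y + t *\<^sub>R e))"
      using psd unfolding pos_semidef_def by blast
    also have "\<dots> = y \<bullet> (S *v y) + t * (y \<bullet> (S *v e)) + t * (e \<bullet> (S *v y)) + t\<^sup>2 * (e \<bullet> (S *v e))"
      by (simp add: matrix_vector_right_distrib Se inner_add_left inner_add_right
          power2_eq_square algebra_simps)
    finally show "0 \<le> 2 * t * (S *v y) $ r + t\<^sup>2 * (e \<bullet> (S *v e))"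
      using y sym unfolding e_def by (simp add: inner_axis')
  qed
  then show ?thesis by (simp add: vec_eq_iff)
qed

lemma pos_semidef_inverse_form_pos:
  assumes psd: "pos_semidef S" and inv: "invertible S" and "y \<noteq> 0"
  shows "0 < y \<bullet> (matrix_inv S *v y)"
proof -
  define x where "x = matrix_inv S *v y"
  have Sx: "S *v x = y"
    unfolding x_def matrix_vector_mul_assoc invertible_matrix_inv(1)[OF inv] by simp
  have "y \<bullet> (matrix_inv S *v y) = x \<bullet> (S *v x)"
    unfolding x_def[symmetric] Sx by (simp add: inner_commute)
  moreover have "x \<bullet> (S *v x) \<noteq> 0"
    using pos_semidef_mult_eq_0_if_form_eq_0[OF psd] Sx \<open>y \<noteq> 0\<close> by auto
  moreover have "0 \<le> x \<bullet> (S *v x)" using psd unfolding pos_semidef_def by blast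
  ultimately show ?thesis by simp
qed

lemma pos_semidef_eq_0_if_trace_eq_0:
  assumes psd: "pos_semidef S" and tr: "trace_m S = 0"
  shows "S = 0"
proof -
  have diag: "S $ i $ i = axis i 1 \<bullet> (S *v axis i 1)" for i
    by (simp add: inner_axis' matrix_vector_mult_basis column_def)
  have "0 \<le> S $ i $ i" for i
    unfolding diag using psd pos_semidef_def by blast
  then have "S $ i $ i = 0" for i
    using tr sum_nonneg_eq_0_iff[of UNIV "\<lambda>i. S $ i $ i"] unfolding trace_m_def by simp
  then have "S *v axis i 1 = 0" for i
    using pos_semidef_mult_eq_0_if_form_eq_0[OF psd] diag by metis
  then have "S $ j $ i = 0" for i j
    by (metis matrix_vector_mult_basis column_def vec_lambda_beta zero_index)
  then show ?thesis by (simp add: vec_eq_iff)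
qed

definition mcv_nondegenerate :: "mcv_variant \<Rightarrow> real^'d \<Rightarrow> real^'d^'d \<Rightarrow> bool" where
  "mcv_nondegenerate v m S \<longleftrightarrow> m \<noteq> 0 \<and> pos_semidef S \<and>
     (case v of
        RR \<Rightarrow> invertible S
      | VN \<Rightarrow> invertible S
      | VV \<Rightarrow> S \<noteq> 0
      | AZ \<Rightarrow> 0 < m \<bullet> (S *v m))"

lemma MCV_nonzero:
  assumes "mcv_nondegenerate v m S"
  shows "MCV v m S \<noteq> 0"
proof -
  have m: "m \<noteq> 0" and psd: "pos_semidef S" using assms by (simp_all add: mcv_nondegenerate_def)
  then have mm: "0 < m \<bullet> m" by simp
  show ?thesis
  proof (cases v)
    case RR
    then have "det S \<noteq> 0"
      using assms invertible_det_nz by (auto simp: mcv_nondegenerate_def)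
    then show ?thesis using RR mm by (simp add: MCV_def)
  next
    case VV
    then have "trace_m S \<noteq> 0"
      using assms pos_semidef_eq_0_if_trace_eq_0[OF psd] by (auto simp: mcv_nondegenerate_def)
    then show ?thesis using VV mm by (simp add: MCV_def)
  next
    case VN
    then have "0 < m \<bullet> (matrix_inv S *v m)"
      using assms pos_semidef_inverse_form_pos[OF psd _ m] by (auto simp: mcv_nondegenerate_def)
    then show ?thesis using VN by (simp add: MCV_def)
  next
    case AZ
    then show ?thesis using assms mm by (simp add: MCV_def mcv_nondegenerate_def)
  qed
qed

lemma Sfac_pos:
  assumes "MCV v m S \<noteq> 0"
  shows "0 < Sfac v m S"
  using assms by (cases v) (simp_all add: Sfac_def)

lemma A2_diag_nonzero:
  fixes m :: "real^'d"
  assumes "mcv_nondegenerate v m S"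
  shows "\<exists>r. A2 v m S (r, r) \<noteq> 0"
proof -
  have m: "m \<noteq> 0" and psd: "pos_semidef S" using assms by (simp_all add: mcv_nondegenerate_def)
  then have mm: "0 < m \<bullet> m" by simp
  show ?thesis
  proof (cases v)
    case RR
    then have inv: "invertible S" using assms by (simp add: mcv_nondegenerate_def)
    fix r :: 'd
    have "0 < axis r 1 \<bullet> (matrix_inv S *v axis r (1::real))"
      using pos_semidef_inverse_form_pos[OF psd inv] by (simp add: axis_eq_0_iff)
    then have "matrix_inv S $ r $ r \<noteq> 0"
      by (simp add: inner_axis' matrix_vector_mult_basis column_def)
    then show ?thesis
      using RR mm inv invertible_det_nz by (auto simp: A2_def)
  next
    case VV
    then show ?thesis using mm by (simp add: A2_def)
  next
    case VN
    then have inv: "invertible S" using assms by (simp add: mcv_nondegenerate_def)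
    have "m v* matrix_inv S \<noteq> 0"
    proof
      assume "m v* matrix_inv S = 0"
      then have "(m v* matrix_inv S) v* S = 0" by (simp add: vec_eq_iff vector_matrix_mult_def)
      then show False
        using m unfolding vector_matrix_mul_assoc invertible_matrix_inv(2)[OF inv] by simp
    qed
    then obtain r where "(m v* matrix_inv S) $ r \<noteq> 0" by (auto simp: vec_eq_iff)
    then show ?thesis using VN by (auto simp: A2_def)
  next
    case AZ
    obtain r where "m $ r \<noteq> 0" using m by (auto simp: vec_eq_iff)
    then show ?thesis using AZ mm by (auto simp: A2_def)
  qed
qed

definition quad_poly :: "('d \<Rightarrow> real) \<Rightarrow> ('d \<times> 'd \<Rightarrow> real) \<Rightarrow> real^'d \<Rightarrow> real" where
  "quad_poly a1 a2 y = (\<Sum>s\<in>UNIV. a1 s * y $ s) + (\<Sum>a\<in>UNIV. \<Sum>b\<in>UNIV. a2 (a, b) * (y $ a * y $ b))"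

definition cross_coeff :: "('d \<Rightarrow> real) \<Rightarrow> ('d \<times> 'd \<Rightarrow> real) \<Rightarrow> 'd \<Rightarrow> real^'d \<Rightarrow> real" where
  "cross_coeff a1 a2 r z = a1 r + (\<Sum>s\<in>UNIV. (a2 (r, s) + a2 (s, r)) * z $ s)"

lemma quad_poly_split_coord:
  "quad_poly a1 a2 y = a2 (r, r) * (y $ r)\<^sup>2 + cross_coeff a1 a2 r (others r y) * y $ r
     + quad_poly a1 a2 (others r y)"
proof -
  define z where "z = others r y"
  define t where "t = y $ r"
  have y: "y $ s = z $ s + (if s = r then t else 0)" for s
    by (simp add: z_def t_def others_def)
  have "z $ r = 0" by (simp add: z_def others_def)
  moreover have [simp]: "x * (if P then u else 0) = (if P then x * u else 0)"
    "(if P then u else 0) * x = (if P then u * x else 0)" for P and x u :: real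
    by simp_all
  moreover have [simp]: "(\<Sum>b\<in>UNIV. if a = r then f b else 0) = (if a = r then sum f UNIV else 0)"
    for a and f :: "'d \<Rightarrow> real"
    by simp
  ultimately show ?thesis
    unfolding quad_poly_def cross_coeff_def y z_def[symmetric] t_def[symmetric]
    by (simp add: algebra_simps sum.distrib sum_distrib_left power2_eq_square)
qed

lemma cond_two_point_if_quad_poly_AE_const:
  fixes X :: "'a \<Rightarrow> real^'d"
  assumes lead: "a2 (r, r) \<noteq> 0" and const: "AE w in M. quad_poly a1 a2 (X w) = K"
  shows "cond_two_point M X r"
proof -
  define c where "c z = quad_poly a1 a2 z - K" for z
  define g where
    "g z = (- cross_coeff a1 a2 r z + sqrt (discrim (a2 (r, r)) (cross_coeff a1 a2 r z) (c z)))
            / (2 * a2 (r, r))" for z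
  define h where
    "h z = (- cross_coeff a1 a2 r z - sqrt (discrim (a2 (r, r)) (cross_coeff a1 a2 r z) (c z)))
            / (2 * a2 (r, r))" for z
  have "g \<in> borel_measurable borel"
    unfolding g_def c_def discrim_def cross_coeff_def quad_poly_def by measurable
  moreover have "h \<in> borel_measurable borel"
    unfolding h_def c_def discrim_def cross_coeff_def quad_poly_def by measurable
  moreover have "AE w in M. X w $ r = g (others r (X w)) \<or> X w $ r = h (others r (X w))"
    using const
  proof (rule AE_mp, intro AE_I2 impI)
    fix w assume "quad_poly a1 a2 (X w) = K"
    then have "a2 (r, r) * (X w $ r)\<^sup>2 + cross_coeff a1 a2 r (others r (X w)) * X w $ r
        + c (others r (X w)) = 0"
      using quad_poly_split_coord[of a1 a2 "X w" r] by (simp add: c_def)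
    then show "X w $ r = g (others r (X w)) \<or> X w $ r = h (others r (X w))"
      unfolding g_def h_def using discriminant_iff[OF lead] by blast
  qed
  ultimately show ?thesis unfolding cond_two_point_def by blast
qed

lemma abs_prod_list_le:
  fixes xs :: "real list"
  assumes len: "length xs \<le> 4" and B: "1 \<le> B" and xs: "\<And>x. x \<in> set xs \<Longrightarrow> x ^ 4 \<le> B"
  shows "\<bar>prod_list xs\<bar> \<le> B"
proof -
  define \<rho> where "\<rho> = root 4 B"
  have \<rho>: "1 \<le> \<rho>" using B by (simp add: \<rho>_def)
  have "\<bar>x\<bar> \<le> \<rho>" if "x \<in> set xs" for x
  proof -
    have "\<bar>x\<bar> = root 4 (\<bar>x\<bar> ^ 4)" by (rule real_root_power_cancel[symmetric]) simp_all
    also have "\<dots> \<le> \<rho>" using xs[OF that] by (simp add: \<rho>_def)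
    finally show ?thesis .
  qed
  then have "\<bar>prod_list xs\<bar> \<le> \<rho> ^ length xs"
  proof (induction xs)
    case (Cons x xs)
    have "\<bar>prod_list (x # xs)\<bar> = \<bar>x\<bar> * \<bar>prod_list xs\<bar>" by (simp add: abs_mult)
    also have "\<dots> \<le> \<rho> * \<rho> ^ length xs"
      using Cons \<rho> by (intro mult_mono) auto
    finally show ?case by simp
  qed simp
  also have "\<dots> \<le> \<rho> ^ 4" using power_increasing[OF len \<rho>] .
  also have "\<dots> = B" using B by (simp add: \<rho>_def)
  finally show ?thesis .
qed

lemma (in prob_space) variance_linear_combination:
  fixes Z :: "'i \<Rightarrow> 'a \<Rightarrow> real" and c :: "'i \<Rightarrow> real"
  assumes Z: "\<And>i. i \<in> I \<Longrightarrow> integrable M (Z i)"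
    and ZZ: "\<And>i j. i \<in> I \<Longrightarrow> j \<in> I \<Longrightarrow> integrable M (\<lambda>w. Z i w * Z j w)"
  defines "L \<equiv> \<lambda>w. \<Sum>i\<in>I. c i * Z i w"
  shows "integrable M (\<lambda>w. (L w - expectation L)\<^sup>2)"
    and "variance L = (\<Sum>i\<in>I. \<Sum>j\<in>I. c i * c j *
           (expectation (\<lambda>w. Z i w * Z j w) - expectation (Z i) * expectation (Z j)))"
proof -
  define K where "K = expectation L"
  have K: "K = (\<Sum>i\<in>I. c i * expectation (Z i))"
    unfolding K_def L_def using Z by (simp add: integral_sum)
  have sq: "(L w - K)\<^sup>2 = (\<Sum>i\<in>I. \<Sum>j\<in>I. c i * c j * (Z i w * Z j w)) - 2 * K * L w + K\<^sup>2" for w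
    unfolding L_def
    by (simp add: power2_eq_square algebra_simps sum_distrib_left sum_distrib_right sum_subtractf)
  have int_ZZ: "integrable M (\<lambda>w. \<Sum>i\<in>I. \<Sum>j\<in>I. c i * c j * (Z i w * Z j w))"
    using ZZ by auto
  have int_L: "integrable M L"
    unfolding L_def using Z by auto
  show "integrable M (\<lambda>w. (L w - expectation L)\<^sup>2)"
    unfolding K_def[symmetric] sq using int_ZZ int_L by auto
  have "variance L = (\<Sum>i\<in>I. \<Sum>j\<in>I. c i * c j * expectation (\<lambda>w. Z i w * Z j w)) - K * K"
    unfolding K_def[symmetric] sq using int_ZZ int_L ZZ
    by (simp add: integral_sum prob_space K_def power2_eq_square)
  also have "K * K = (\<Sum>i\<in>I. \<Sum>j\<in>I. c i * c j * (expectation (Z i) * expectation (Z j)))"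
    unfolding K by (simp add: sum_distrib_left sum_distrib_right algebra_simps)
  finally show "variance L = (\<Sum>i\<in>I. \<Sum>j\<in>I. c i * c j *
           (expectation (\<lambda>w. Z i w * Z j w) - expectation (Z i) * expectation (Z j)))"
    by (simp add: right_diff_distrib sum_subtractf)
qed

definition coord_monomial :: "('a \<Rightarrow> real^'d) \<Rightarrow> 'd + 'd \<times> 'd \<Rightarrow> 'a \<Rightarrow> real" where
  "coord_monomial X i w = (case i of Inl s \<Rightarrow> X w $ s | Inr (a, b) \<Rightarrow> X w $ a * X w $ b)"

lemma sum_UNIV_Plus:
  "(\<Sum>i\<in>(UNIV :: ('b::finite + 'c::finite) set). f i) = (\<Sum>s\<in>UNIV. f (Inl s)) + (\<Sum>p\<in>UNIV. f (Inr p))"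
  by (subst UNIV_Plus_UNIV[symmetric], subst sum.Plus) auto

lemma sum_UNIV_prod:
  "(\<Sum>p\<in>(UNIV :: ('b::finite \<times> 'c::finite) set). f p) = (\<Sum>a\<in>UNIV. \<Sum>b\<in>UNIV. f (a, b))"
  by (simp add: sum.cartesian_product)

lemma quad_poly_eq_sum_coord_monomial:
  "quad_poly a1 a2 (X w) = (\<Sum>i\<in>UNIV. case_sum a1 a2 i * coord_monomial X i w)"
  by (simp add: quad_poly_def coord_monomial_def sum_UNIV_Plus sum_UNIV_prod)

definition Gamma_form ::
    "'a measure \<Rightarrow> ('a \<Rightarrow> real^'d) \<Rightarrow> ('d \<Rightarrow> real) \<Rightarrow> ('d \<times> 'd \<Rightarrow> real) \<Rightarrow> real"
  where
  "Gamma_form M X a1 a2 =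
      (\<Sum>r\<in>UNIV. \<Sum>s\<in>UNIV. a1 r * Sig M X $ r $ s * a1 s)
    + (\<Sum>r\<in>UNIV. \<Sum>p\<in>UNIV. a1 r * Psi3 M X p r * a2 p)
    + (\<Sum>p\<in>UNIV. \<Sum>s\<in>UNIV. a2 p * Psi3 M X p s * a1 s)
    + (\<Sum>p\<in>UNIV. \<Sum>q\<in>UNIV. a2 p * Psi4 M X p q * a2 q)"

lemma sigma2_C_eq_Gamma_form:
  "sigma2_C v M X = Sfac v (mu M X) (Sig M X) / 4
     * Gamma_form M X (A1 v (mu M X) (Sig M X)) (A2 v (mu M X) (Sig M X))"
  by (simp add: sigma2_C_def Gamma_form_def Let_def)

locale fourth_moments = prob_space M for M :: "'a measure" +
  fixes X :: "'a \<Rightarrow> real^'d"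
  assumes measurable_X: "X \<in> borel_measurable M"
    and integrable_pow4: "\<And>i. integrable M (\<lambda>w. (X w $ i) ^ 4)"
begin

lemma integrable_coord_prod:
  assumes "length is \<le> 4"
  shows "integrable M (\<lambda>w. \<Prod>i\<leftarrow>is. X w $ i)"
proof (rule Bochner_Integration.integrable_bound)
  have coord: "(\<lambda>w. X w $ i) \<in> borel_measurable M" for i
    using measurable_X by (rule measurable_compose) (intro borel_measurable_continuous_onI continuous_intros)
  show "integrable M (\<lambda>w. 1 + (\<Sum>i\<in>UNIV. (X w $ i) ^ 4))"
    using integrable_pow4 by auto
  show "(\<lambda>w. \<Prod>i\<leftarrow>is. X w $ i) \<in> borel_measurable M"
    using coord by (induction "is") auto
  have "(X w $ i) ^ 4 \<le> 1 + (\<Sum>i\<in>UNIV. (X w $ i) ^ 4)" for w i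
    using member_le_sum[of i UNIV "\<lambda>i. (X w $ i) ^ 4"] by (simp add: zero_le_even_power)
  then have "\<bar>\<Prod>i\<leftarrow>is. X w $ i\<bar> \<le> 1 + (\<Sum>i\<in>UNIV. (X w $ i) ^ 4)" for w
    using assms by (intro abs_prod_list_le) (auto simp: sum_nonneg zero_le_even_power)
  moreover have "0 \<le> 1 + (\<Sum>i\<in>UNIV. (X w $ i) ^ 4)" for w
    by (simp add: sum_nonneg zero_le_even_power add_nonneg_nonneg)
  ultimately show "AE w in M. norm (\<Prod>i\<leftarrow>is. X w $ i) \<le> norm (1 + (\<Sum>i\<in>UNIV. (X w $ i) ^ 4))"
    by simp
qed

lemma integrable_coord_monomial:
  shows "integrable M (coord_monomial X i)"
    and "integrable M (\<lambda>w. coord_monomial X i w * coord_monomial X j w)"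
proof -
  define idx :: "'d + 'd \<times> 'd \<Rightarrow> 'd list" where "idx = case_sum (\<lambda>s. [s]) (\<lambda>(a, b). [a, b])"
  have as_prod: "coord_monomial X k = (\<lambda>w. \<Prod>l\<leftarrow>idx k. X w $ l)" for k
    by (auto simp: coord_monomial_def idx_def split: sum.split)
  have len: "length (idx k) \<le> 2" for k
    by (auto simp: idx_def split: sum.split)
  show "integrable M (coord_monomial X i)"
    unfolding as_prod using len[of i] by (intro integrable_coord_prod) simp
  show "integrable M (\<lambda>w. coord_monomial X i w * coord_monomial X j w)"
    using integrable_coord_prod[of "idx i @ idx j"] len[of i] len[of j] by (simp add: as_prod)
qed

lemma Gamma_form_eq_variance:
  shows "Gamma_form M X a1 a2 = variance (\<lambda>w. quad_poly a1 a2 (X w))"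
    and "integrable M (\<lambda>w. (quad_poly a1 a2 (X w) - expectation (\<lambda>w. quad_poly a1 a2 (X w)))\<^sup>2)"
proof -
  note var = variance_linear_combination[of UNIV "coord_monomial X" "case_sum a1 a2",
      OF integrable_coord_monomial, folded quad_poly_eq_sum_coord_monomial]
  show "integrable M (\<lambda>w. (quad_poly a1 a2 (X w) - expectation (\<lambda>w. quad_poly a1 a2 (X w)))\<^sup>2)"
    using var(1) .
  show "Gamma_form M X a1 a2 = variance (\<lambda>w. quad_poly a1 a2 (X w))"
    unfolding var(2) sum_UNIV_Plus sum.distrib
    by (simp add: Gamma_form_def coord_monomial_def[abs_def] Sig_def mu_def Psi3_def Psi4_def E_def
        split_beta mult_ac)
qed

lemma Sig_pos_semidef: "pos_semidef (Sig M X)"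
  unfolding pos_semidef_def
proof (intro conjI allI)
  show "transpose (Sig M X) = Sig M X"
    by (simp add: Sig_def transpose_def vec_eq_iff mult.commute)
  fix y :: "real^'d"
  have "y \<bullet> (Sig M X *v y) = Gamma_form M X (\<lambda>s. y $ s) (\<lambda>_. 0)"
    by (simp add: Gamma_form_def inner_vec_def matrix_vector_mult_def sum_distrib_left mult_ac)
  then show "0 \<le> y \<bullet> (Sig M X *v y)"
    unfolding Gamma_form_eq_variance(1) by (simp add: variance_positive)
qed

lemma Gamma_form_pos:
  assumes lead: "a2 (r, r) \<noteq> 0" and "\<not> cond_two_point M X r"
  shows "0 < Gamma_form M X a1 a2"
proof (rule ccontr)
  let ?q = "\<lambda>w. quad_poly a1 a2 (X w)"
  assume "\<not> 0 < Gamma_form M X a1 a2"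
  then have "variance ?q = 0"
    using variance_positive[of ?q] unfolding Gamma_form_eq_variance(1) by simp
  then have "AE w in M. (?q w - expectation ?q)\<^sup>2 = 0"
    using integral_nonneg_eq_0_iff_AE[OF Gamma_form_eq_variance(2)] by simp
  then have "AE w in M. ?q w = expectation ?q"
    by (rule AE_mp) auto
  with lead have "cond_two_point M X r"
    by (rule cond_two_point_if_quad_poly_AE_const)
  with assms(2) show False ..
qed

end

theorem lemma2:
  fixes M :: "'a measure" and X :: "'a \<Rightarrow> real^'d" and v :: mcv_variant
  assumes "prob_space M"
    and "X \<in> borel_measurable M"
    and "assumption1 v M X"
    and "assumption2 M X"
  shows "sigma2_C v M X > 0 \<and> sigma2_B v M X > 0"
proof -
  define m where "m = mu M X"
  define S where "S = Sig M X"
  have "integrable M (\<lambda>w. (X w $ i) ^ 4)" for i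
    using assms(3) by (simp add: assumption1_def)
  then interpret fourth_moments M X
    using assms(1,2) by (simp add: fourth_moments_def fourth_moments_axioms_def)
  have nondeg: "mcv_nondegenerate v m S"
    using assms(3) Sig_pos_semidef
    by (simp add: assumption1_def mcv_nondegenerate_def m_def S_def split: mcv_variant.split)
  have MCV: "MCV v m S \<noteq> 0" using MCV_nonzero[OF nondeg] .
  obtain r where "A2 v m S (r, r) \<noteq> 0" using A2_diag_nonzero[OF nondeg] ..
  moreover have "\<not> cond_two_point M X r" using assms(4) by (simp add: assumption2_def)
  ultimately have "0 < Gamma_form M X (A1 v m S) (A2 v m S)"
    unfolding m_def S_def by (rule Gamma_form_pos)
  then have C: "0 < sigma2_C v M X"
    using Sfac_pos[OF MCV] by (simp add: sigma2_C_eq_Gamma_form m_def[symmetric] S_def[symmetric])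
  moreover have "0 < sigma2_B v M X"
    using C MCV by (simp add: sigma2_B_def m_def[symmetric] S_def[symmetric])
  ultimately show ?thesis ..
qed

end
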